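(* Let $f\colon G\to H$ be an epimorphism between graphs. Then there are a graph $M$ and epimorphisms $m\colon G\to M$ and $l\colon M\to H$ such that $f=l\circ m$, $m$ is monotone and $l$ is light.
   Context: A graph is a pair $A=(V(A),E(A))$ with $E(A)\subseteq V(A)^2$ reflexive and symmetric. An epimorphism is a map on vertices sending edges to edges that is surjective on vertices and on edges. A set $S\subseteq V(G)$ is disconnected if $S=P\cup Q$ with $P,Q$ nonempty disjoint and no edge of $G$ between $P$ and $Q$; otherwise connected. An epimorphism is monotone if the preimage of every connected set is connected. An epimorphism $f\colon G\to H$ is light if for every $h\in V(H)$ and distinct $a,b\in f^{-1}(h)$ we have $\langle a,b\rangle\notin E(G)$. *)

theory Defs
  imports Main
begin

type_synonym 'a graph = "'a set \<times> ('a \<times> 'a) set"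

definition verts :: "'a graph \<Rightarrow> 'a set" where "verts A = fst A"
definition edges :: "'a graph \<Rightarrow> ('a \<times> 'a) set" where "edges A = snd A"

definition is_graph :: "'a graph \<Rightarrow> bool" where
  "is_graph A \<longleftrightarrow> edges A \<subseteq> verts A \<times> verts A
     \<and> (\<forall>v\<in>verts A. (v, v) \<in> edges A)
     \<and> (\<forall>a b. (a, b) \<in> edges A \<longrightarrow> (b, a) \<in> edges A)"

definition epimorphism :: "('a \<Rightarrow> 'b) \<Rightarrow> 'a graph \<Rightarrow> 'b graph \<Rightarrow> bool" where
  "epimorphism f G H \<longleftrightarrow>
     f ` verts G \<subseteq> verts H
     \<and> (\<forall>a b. (a, b) \<in> edges G \<longrightarrow> (f a, f b) \<in> edges H)
     \<and> f ` verts G = verts H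
     \<and> (\<lambda>(a, b). (f a, f b)) ` edges G = edges H"

definition disconnected_set :: "'a graph \<Rightarrow> 'a set \<Rightarrow> bool" where
  "disconnected_set G S \<longleftrightarrow>
     (\<exists>P Q. S = P \<union> Q \<and> P \<noteq> {} \<and> Q \<noteq> {} \<and> P \<inter> Q = {}
        \<and> (\<forall>p\<in>P. \<forall>q\<in>Q. (p, q) \<notin> edges G))"

definition connected_set :: "'a graph \<Rightarrow> 'a set \<Rightarrow> bool" where
  "connected_set G S \<longleftrightarrow> \<not> disconnected_set G S"

definition monotone_epi :: "('a \<Rightarrow> 'b) \<Rightarrow> 'a graph \<Rightarrow> 'b graph \<Rightarrow> bool" where
  "monotone_epi f G H \<longleftrightarrow> epimorphism f G H
     \<and> (\<forall>S \<subseteq> verts H. connected_set H S \<longrightarrow> connected_set G (f -` S \<inter> verts G))"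

definition light_epi :: "('a \<Rightarrow> 'b) \<Rightarrow> 'a graph \<Rightarrow> 'b graph \<Rightarrow> bool" where
  "light_epi f G H \<longleftrightarrow> epimorphism f G H
     \<and> (\<forall>h\<in>verts H. \<forall>a\<in>verts G. \<forall>b\<in>verts G.
          f a = h \<and> f b = h \<and> a \<noteq> b \<longrightarrow> (a, b) \<notin> edges G)"

end

theory Submission
  imports Defs
begin

text \<open>Let m collapse each connected component of each fibre of f (components taken along the
  edges of G on which f is constant) to a point, and let M be the image of G under m. The fibres
  of m are connected, so m is monotone; and an edge of M joining two vertices with the same
  image under the induced map l comes from an edge of G along which f is constant, whose ends
  lie in one component, so l is light.\<close>

lemma is_graph_edges_subset: "is_graph G \<Longrightarrow> edges G \<subseteq> verts G \<times> verts G"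
  and is_graph_sym: "is_graph G \<Longrightarrow> sym (edges G)"
  unfolding is_graph_def sym_def by blast+

lemma connected_set_subset_separated:
  assumes "connected_set G C" "C \<subseteq> P \<union> Q" and sep: "\<forall>p\<in>P. \<forall>q\<in>Q. (p, q) \<notin> edges G"
  shows "C \<subseteq> P \<or> C \<subseteq> Q"
proof (rule ccontr)
  assume "\<not> (C \<subseteq> P \<or> C \<subseteq> Q)"
  then have "C \<inter> P \<noteq> {}" "C - P \<noteq> {}"
    using assms(2) by auto
  moreover have "\<forall>p\<in>C \<inter> P. \<forall>q\<in>C - P. (p, q) \<notin> edges G"
    using assms(2) sep by blast
  ultimately have "disconnected_set G C"
    unfolding disconnected_set_def by (intro exI[of _ "C \<inter> P"] exI[of _ "C - P"]) auto
  then show False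
    using assms(1) unfolding connected_set_def by simp
qed

lemma connected_set_rtrancl_Image:
  assumes "is_graph G" "R \<subseteq> edges G"
  shows "connected_set G (R\<^sup>* `` {x})"
  unfolding connected_set_def
proof
  assume "disconnected_set G (R\<^sup>* `` {x})"
  then obtain P Q where PQ: "R\<^sup>* `` {x} = P \<union> Q" "P \<noteq> {}" "Q \<noteq> {}" "P \<inter> Q = {}"
    and sep: "\<forall>p\<in>P. \<forall>q\<in>Q. (p, q) \<notin> edges G"
    unfolding disconnected_set_def by blast
  have sep': "(q, p) \<notin> edges G" if "p \<in> P" "q \<in> Q" for p q
    using sep that is_graph_sym[OF assms(1)] unfolding sym_def by blast
  have reach: "(x, y) \<in> R\<^sup>* \<longleftrightarrow> y \<in> P \<union> Q" for y
    by (simp only: Image_singleton_iff[symmetric] PQ(1))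
  have side: "y \<in> P \<longleftrightarrow> x \<in> P" if "(x, y) \<in> R\<^sup>*" for y
    using that
  proof (induction rule: rtrancl_induct)
    case (step y z)
    have "(x, z) \<in> R\<^sup>*"
      using step.hyps by (rule rtrancl_into_rtrancl)
    then have "y \<in> P \<union> Q" "z \<in> P \<union> Q"
      using step.hyps(1) reach by simp_all
    moreover have "(y, z) \<in> edges G"
      using step.hyps(2) assms(2) by blast
    ultimately have "z \<in> P \<longleftrightarrow> y \<in> P"
      using sep sep' PQ(4) by blast
    with step.IH show ?case by simp
  qed simp
  obtain p q where "p \<in> P" "q \<in> Q"
    using PQ(2,3) by blast
  then have "p \<in> P \<longleftrightarrow> q \<in> P"
    using side[of p] side[of q] reach[of p] reach[of q] by simp
  then show False
    using \<open>p \<in> P\<close> \<open>q \<in> Q\<close> PQ(4) by blast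
qed

definition image_graph :: "('a \<Rightarrow> 'b) \<Rightarrow> 'a graph \<Rightarrow> 'b graph" where
  "image_graph q G = (q ` verts G, (\<lambda>(a, b). (q a, q b)) ` edges G)"

lemma verts_image_graph [simp]: "verts (image_graph q G) = q ` verts G"
  and edges_image_graph [simp]: "edges (image_graph q G) = (\<lambda>(a, b). (q a, q b)) ` edges G"
  unfolding image_graph_def verts_def edges_def by simp_all

lemma is_graph_image_graph:
  assumes "is_graph G"
  shows "is_graph (image_graph q G)"
  unfolding is_graph_def
proof (intro conjI ballI allI impI)
  show "edges (image_graph q G) \<subseteq> verts (image_graph q G) \<times> verts (image_graph q G)"
    using is_graph_edges_subset[OF assms] by auto
next
  fix C assume "C \<in> verts (image_graph q G)"
  then obtain v where "v \<in> verts G" "C = q v"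
    by auto
  then show "(C, C) \<in> edges (image_graph q G)"
    using assms unfolding is_graph_def by force
next
  fix C D assume "(C, D) \<in> edges (image_graph q G)"
  then obtain a b where "(a, b) \<in> edges G" "C = q a" "D = q b"
    by auto
  then show "(D, C) \<in> edges (image_graph q G)"
    using assms unfolding is_graph_def by force
qed

lemma epimorphism_image_graph: "epimorphism q G (image_graph q G)"
  unfolding epimorphism_def by auto

lemma epimorphism_image_graph_factor:
  assumes "is_graph G" "epimorphism f G H" and f_eq: "\<forall>x\<in>verts G. f x = l (q x)"
  shows "epimorphism l (image_graph q G) H"
proof -
  have verts_eq: "l ` verts (image_graph q G) = verts H"
    using assms(2) f_eq unfolding epimorphism_def by (simp add: image_image)
  have "(\<lambda>(a, b). (l a, l b)) ` edges (image_graph q G) = (\<lambda>(a, b). (f a, f b)) ` edges G"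
    unfolding edges_image_graph image_image
    using f_eq is_graph_edges_subset[OF assms(1)] by (intro image_cong) auto
  then have edges_eq: "(\<lambda>(a, b). (l a, l b)) ` edges (image_graph q G) = edges H"
    using assms(2) unfolding epimorphism_def by simp
  have "(l C, l D) \<in> edges H" if "(C, D) \<in> edges (image_graph q G)" for C D
    using pair_imageI[OF that, of "\<lambda>a b. (l a, l b)"] edges_eq by simp
  with verts_eq edges_eq show ?thesis
    unfolding epimorphism_def by blast
qed

lemma disconnected_set_image_graph:
  assumes "is_graph G" "S \<subseteq> verts (image_graph q G)"
    and PQ: "q -` S \<inter> verts G = P \<union> Q" "P \<noteq> {}" "Q \<noteq> {}" "P \<inter> Q = {}"
    and sep: "\<forall>p\<in>P. \<forall>q\<in>Q. (p, q) \<notin> edges G"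
    and same_side: "\<And>x y. x \<in> P \<union> Q \<Longrightarrow> y \<in> verts G \<Longrightarrow> q y = q x \<Longrightarrow> y \<in> P \<longleftrightarrow> x \<in> P"
  shows "disconnected_set (image_graph q G) S"
  unfolding disconnected_set_def
proof (intro exI conjI)
  have "S = q ` (q -` S \<inter> verts G)"
    using assms(2) by auto
  then show "S = q ` P \<union> q ` Q"
    unfolding PQ(1) by (simp only: image_Un)
  show "q ` P \<noteq> {}" "q ` Q \<noteq> {}"
    using PQ(2,3) by auto
  show "q ` P \<inter> q ` Q = {}"
    using same_side PQ(1,4) by blast
  show "\<forall>C\<in>q ` P. \<forall>D\<in>q ` Q. (C, D) \<notin> edges (image_graph q G)"
  proof (intro ballI notI)
    fix C D assume "C \<in> q ` P" "D \<in> q ` Q" "(C, D) \<in> edges (image_graph q G)"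
    then obtain a b p p' where "(a, b) \<in> edges G" "p \<in> P" "p' \<in> Q" "q a = q p" "q b = q p'"
      by auto
    moreover have "a \<in> verts G" "b \<in> verts G"
      using \<open>(a, b) \<in> edges G\<close> is_graph_edges_subset[OF assms(1)] by auto
    moreover have "b \<in> P \<union> Q"
      using \<open>b \<in> verts G\<close> \<open>q b = q p'\<close> \<open>p' \<in> Q\<close> PQ(1) by blast
    ultimately have "a \<in> P" "b \<in> Q"
      using same_side[of p a] same_side[of p' b] PQ(4) by auto
    then show False
      using sep \<open>(a, b) \<in> edges G\<close> by blast
  qed
qed

lemma monotone_epi_image_graph:
  assumes "is_graph G" and fibres: "\<forall>x\<in>verts G. connected_set G {y \<in> verts G. q y = q x}"
  shows "monotone_epi q G (image_graph q G)"
  unfolding monotone_epi_def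
proof (intro conjI allI impI epimorphism_image_graph)
  fix S assume S: "S \<subseteq> verts (image_graph q G)" and S_conn: "connected_set (image_graph q G) S"
  show "connected_set G (q -` S \<inter> verts G)"
    unfolding connected_set_def
  proof
    assume "disconnected_set G (q -` S \<inter> verts G)"
    then obtain P Q where PQ: "q -` S \<inter> verts G = P \<union> Q" "P \<noteq> {}" "Q \<noteq> {}" "P \<inter> Q = {}"
      and sep: "\<forall>p\<in>P. \<forall>q\<in>Q. (p, q) \<notin> edges G"
      unfolding disconnected_set_def by blast
    have same_side: "y \<in> P \<longleftrightarrow> x \<in> P" if "x \<in> P \<union> Q" "y \<in> verts G" "q y = q x" for x y
    proof -
      let ?F = "{z \<in> verts G. q z = q x}"
      have "x \<in> verts G" "q x \<in> S"
        using that(1) PQ(1) by auto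
      then have "connected_set G ?F" "?F \<subseteq> P \<union> Q"
        using fibres PQ(1) by (blast, force)
      then have "?F \<subseteq> P \<or> ?F \<subseteq> Q"
        using sep by (rule connected_set_subset_separated)
      moreover have "x \<in> ?F" "y \<in> ?F"
        using that \<open>x \<in> verts G\<close> by auto
      ultimately show ?thesis
        using PQ(4) by blast
    qed
    have "disconnected_set (image_graph q G) S"
      using assms(1) S PQ sep same_side by (rule disconnected_set_image_graph)
    then show False
      using S_conn unfolding connected_set_def by simp
  qed
qed

lemma light_epi_image_graph:
  assumes "is_graph G" "epimorphism f G H" and f_eq: "\<forall>x\<in>verts G. f x = l (q x)"
    and "\<And>a b. (a, b) \<in> edges G \<Longrightarrow> f a = f b \<Longrightarrow> q a = q b"
  shows "light_epi l (image_graph q G) H"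
  unfolding light_epi_def
proof (intro conjI ballI impI notI)
  show "epimorphism l (image_graph q G) H"
    using epimorphism_image_graph_factor assms(1-3) .
  fix h C D assume "l C = h \<and> l D = h \<and> C \<noteq> D" and "(C, D) \<in> edges (image_graph q G)"
  then obtain a b where "(a, b) \<in> edges G" "C = q a" "D = q b" "q a \<noteq> q b" "l (q a) = l (q b)"
    by auto
  then show False
    using assms(4) f_eq is_graph_edges_subset[OF assms(1)] by fastforce
qed

definition fibre_edges :: "('a \<Rightarrow> 'b) \<Rightarrow> 'a graph \<Rightarrow> ('a \<times> 'a) set" where
  "fibre_edges f G = {(a, b) \<in> edges G. f a = f b}"

definition fibre_component :: "('a \<Rightarrow> 'b) \<Rightarrow> 'a graph \<Rightarrow> 'a \<Rightarrow> 'a set" where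
  "fibre_component f G x = (fibre_edges f G)\<^sup>* `` {x}"

lemma fibre_edges_subset: "fibre_edges f G \<subseteq> edges G"
  unfolding fibre_edges_def by blast

lemma equiv_rtrancl_fibre_edges:
  assumes "is_graph G"
  shows "equiv UNIV ((fibre_edges f G)\<^sup>*)"
proof -
  have "sym (fibre_edges f G)"
    using is_graph_sym[OF assms] unfolding fibre_edges_def sym_def by auto
  then show ?thesis
    by (simp add: equivI refl_rtrancl sym_rtrancl trans_rtrancl)
qed

lemma fibre_component_eq_iff:
  assumes "is_graph G"
  shows "fibre_component f G x = fibre_component f G y \<longleftrightarrow> y \<in> fibre_component f G x"
  unfolding fibre_component_def
  using eq_equiv_class_iff[OF equiv_rtrancl_fibre_edges[OF assms]] by simp

lemma self_in_fibre_component: "x \<in> fibre_component f G x"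
  unfolding fibre_component_def by simp

lemma fibre_component_const:
  assumes "y \<in> fibre_component f G x"
  shows "f y = f x"
proof -
  have "(x, y) \<in> (fibre_edges f G)\<^sup>*"
    using assms unfolding fibre_component_def by simp
  then show ?thesis
    by (induction rule: rtrancl_induct) (auto simp: fibre_edges_def)
qed

lemma fibre_component_subset_verts:
  assumes "is_graph G" "x \<in> verts G"
  shows "fibre_component f G x \<subseteq> verts G"
proof
  fix y assume "y \<in> fibre_component f G x"
  then have "(x, y) \<in> (fibre_edges f G)\<^sup>*"
    unfolding fibre_component_def by simp
  then show "y \<in> verts G"
    using assms fibre_edges_subset is_graph_edges_subset
    by (induction rule: rtrancl_induct) blast+
qed

lemma fibre_component_eq_if_edge:
  assumes "is_graph G" "(a, b) \<in> edges G" "f a = f b"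
  shows "fibre_component f G a = fibre_component f G b"
proof -
  have "(a, b) \<in> fibre_edges f G"
    using assms(2,3) unfolding fibre_edges_def by simp
  then have "b \<in> fibre_component f G a"
    unfolding fibre_component_def by simp
  then show ?thesis
    using fibre_component_eq_iff[OF assms(1)] by blast
qed

lemma connected_set_fibre_component:
  assumes "is_graph G"
  shows "connected_set G (fibre_component f G x)"
  unfolding fibre_component_def
  using connected_set_rtrancl_Image[OF assms fibre_edges_subset] .

lemma fibres_of_fibre_component:
  assumes "is_graph G" "x \<in> verts G"
  shows "{y \<in> verts G. fibre_component f G y = fibre_component f G x} = fibre_component f G x"
  using fibre_component_eq_iff[OF assms(1), of f x] fibre_component_subset_verts[OF assms, of f]
  by auto

theorem proposition4p14:
  fixes f :: "'a \<Rightarrow> 'b" and G :: "'a graph" and H :: "'b graph"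
  assumes "is_graph G" and "is_graph H" and "epimorphism f G H"
  shows "\<exists>(M :: 'a set graph) m l. is_graph M
           \<and> epimorphism m G M \<and> epimorphism l M H
           \<and> (\<forall>x\<in>verts G. f x = l (m x))
           \<and> monotone_epi m G M \<and> light_epi l M H"
proof -
  define m where "m = fibre_component f G"
  define l :: "'a set \<Rightarrow> 'b" where "l C = f (SOME x. x \<in> C)" for C
  have factor: "\<forall>x\<in>verts G. f x = l (m x)"
    unfolding l_def m_def
    by (metis fibre_component_const self_in_fibre_component someI)
  have "\<forall>x\<in>verts G. connected_set G {y \<in> verts G. m y = m x}"
    unfolding m_def
    by (metis fibres_of_fibre_component[OF assms(1)] connected_set_fibre_component[OF assms(1)])
  then have "monotone_epi m G (image_graph m G)"
    using monotone_epi_image_graph[OF assms(1)] by blast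
  moreover have "light_epi l (image_graph m G) H"
    using assms(1,3) factor fibre_component_eq_if_edge[OF assms(1)]
    unfolding m_def by (rule light_epi_image_graph)
  moreover have "epimorphism l (image_graph m G) H"
    using assms(1,3) factor by (rule epimorphism_image_graph_factor)
  ultimately show ?thesis
    using is_graph_image_graph[OF assms(1)] epimorphism_image_graph factor by blast
qed

end
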